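(* Let $x=[x_1,\dots,x_N]\in S_N$ contain a minimal $[4321]$-pattern at positions $p<q<r<s$, and let $x'$ be obtained from $x$ by exchanging the entries in positions $q$ and $r$ (so that $(x'_p,x'_q,x'_r,x'_s)$ is a $[4231]$-pattern). Then $\omega(\pi_{x'})=\omega(\pi_x)$.
   Context: Permutations are in one-line notation and composed as functions. $H_0(S_N)$ is generated by $\pi_1,\dots,\pi_{N-1}$ with $\pi_i^2=\pi_i$, $\pi_i\pi_j=\pi_j\pi_i$ for $|i-j|\ge2$, $\pi_i\pi_{i+1}\pi_i=\pi_{i+1}\pi_i\pi_{i+1}$; $\pi_w=\pi_{i_1}\cdots\pi_{i_k}$ for a reduced word $w=s_{i_1}\cdots s_{i_k}$. $\phi$ is the quotient morphism from $H_0(S_N)$ onto its quotient by the relations $\pi_i\pi_{i+1}\pi_i=\pi_i\pi_{i+1}$ ($1\le i\le N-2$), $\pi_i\mapsto\pi_i$; $\Psi$ is the automorphism of $H_0(S_N)$ with $\Psi(\pi_i)=\pi_{N-i}$; $\omega(y)=(\phi(y),\phi(\Psi(y)))$. A $[4321]$-pattern is a quadruple of positions $p<q<r<s$ with $x_p>x_q>x_r>x_s$; its width is $(q-p,r-q,s-r)$, and it is minimal if its width is lexicographically minimal among all $[4321]$-patterns in $x$. *)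

theory Defs
  imports "HOL-Combinatorics.Combinatorics" "HOL-Library.Product_Lexorder"
begin

text \<open>Permutations of S_N in one-line notation: a function x with x permutes {1..N},
  the one-line notation being [x 1, ..., x N]. Composition is function composition.\<close>

definition st :: "nat \<Rightarrow> nat \<Rightarrow> nat" where
  "st i = Transposition.transpose i (Suc i)"

definition word_perm :: "nat list \<Rightarrow> nat \<Rightarrow> nat" where
  "word_perm w = foldr (\<lambda>i f. st i \<circ> f) w id"

definition is_word :: "nat \<Rightarrow> nat list \<Rightarrow> bool" where
  "is_word N w \<longleftrightarrow> set w \<subseteq> {1..<N}"

definition reduced_word :: "nat \<Rightarrow> (nat \<Rightarrow> nat) \<Rightarrow> nat list \<Rightarrow> bool" where
  "reduced_word N x w \<longleftrightarrow> is_word N w \<and> word_perm w = x \<and>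
     (\<forall>v. is_word N v \<and> word_perm v = x \<longrightarrow> length w \<le> length v)"

text \<open>A chosen reduced word; pi_x is represented by it (any choice gives the same
  element of H_0(S_N), by Matsumoto's theorem, since the braid relations hold there).\<close>
definition red_word :: "nat \<Rightarrow> (nat \<Rightarrow> nat) \<Rightarrow> nat list" where
  "red_word N x = (SOME w. reduced_word N x w)"

inductive hecke_base :: "nat \<Rightarrow> nat list \<Rightarrow> nat list \<Rightarrow> bool" for N where
  idem: "1 \<le> i \<Longrightarrow> i < N \<Longrightarrow> hecke_base N [i, i] [i]"
| comm: "1 \<le> i \<Longrightarrow> i < N \<Longrightarrow> 1 \<le> j \<Longrightarrow> j < N \<Longrightarrow> i + 2 \<le> j \<or> j + 2 \<le> i
           \<Longrightarrow> hecke_base N [i, j] [j, i]"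
| braid: "1 \<le> i \<Longrightarrow> i + 1 < N \<Longrightarrow> hecke_base N [i, Suc i, i] [Suc i, i, Suc i]"

inductive quot_base :: "nat \<Rightarrow> nat list \<Rightarrow> nat list \<Rightarrow> bool" for N where
  hecke: "hecke_base N u v \<Longrightarrow> quot_base N u v"
| extra: "1 \<le> i \<Longrightarrow> i + 1 < N \<Longrightarrow> quot_base N [i, Suc i, i] [i, Suc i]"

inductive quot_cong :: "nat \<Rightarrow> nat list \<Rightarrow> nat list \<Rightarrow> bool" for N where
  step: "quot_base N u v \<Longrightarrow> is_word N xs \<Longrightarrow> is_word N ys
           \<Longrightarrow> quot_cong N (xs @ u @ ys) (xs @ v @ ys)"
| refl: "quot_cong N w w"
| sym: "quot_cong N u v \<Longrightarrow> quot_cong N v u"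
| trans: "quot_cong N u v \<Longrightarrow> quot_cong N v w \<Longrightarrow> quot_cong N u w"

definition phi :: "nat \<Rightarrow> nat list \<Rightarrow> nat list set" where
  "phi N w = {v. quot_cong N w v}"

definition Psi :: "nat \<Rightarrow> nat list \<Rightarrow> nat list" where
  "Psi N w = map (\<lambda>i. N - i) w"

definition omega :: "nat \<Rightarrow> nat list \<Rightarrow> nat list set \<times> nat list set" where
  "omega N w = (phi N w, phi N (Psi N w))"

definition omega_perm :: "nat \<Rightarrow> (nat \<Rightarrow> nat) \<Rightarrow> nat list set \<times> nat list set" where
  "omega_perm N x = omega N (red_word N x)"

definition is_4321 :: "nat \<Rightarrow> (nat \<Rightarrow> nat) \<Rightarrow> nat \<Rightarrow> nat \<Rightarrow> nat \<Rightarrow> nat \<Rightarrow> bool" where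
  "is_4321 N x p q r s \<longleftrightarrow> 1 \<le> p \<and> p < q \<and> q < r \<and> r < s \<and> s \<le> N \<and>
     x p > x q \<and> x q > x r \<and> x r > x s"

definition width :: "nat \<Rightarrow> nat \<Rightarrow> nat \<Rightarrow> nat \<Rightarrow> nat \<times> nat \<times> nat" where
  "width p q r s = (q - p, r - q, s - r)"

text \<open>Lexicographic order on triples (Product_Lexorder).\<close>
definition minimal_4321 :: "nat \<Rightarrow> (nat \<Rightarrow> nat) \<Rightarrow> nat \<Rightarrow> nat \<Rightarrow> nat \<Rightarrow> nat \<Rightarrow> bool" where
  "minimal_4321 N x p q r s \<longleftrightarrow> is_4321 N x p q r s \<and>
     (\<forall>p' q' r' s'. is_4321 N x p' q' r' s' \<longrightarrow> width p q r s \<le> width p' q' r' s')"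

end

theory Submission
  imports Defs
begin

text \<open>The quotient of H_0(S_N) by pi_i pi_(i+1) pi_i = pi_i pi_(i+1) acts on {1..N} by monotone
  maps, pi_i merging i+1 into i, and words with the same action are congruent: every word is
  congruent to a normal word read off from its action. For a reduced word of x the action sends
  j to the minimum of x on {j..N}, and the action of its Psi-image is determined in the same way by
  the maxima of x on the prefixes {1..m}. Exchanging the two middle entries of a [4321]-pattern
  changes neither the suffix minima (x_s stays below them) nor the prefix maxima (x_p stays above
  them), so omega is unchanged.\<close>

section \<open>Words and the quotient congruence\<close>

lemma is_word_Nil [simp]: "is_word N []"
  by (simp add: is_word_def)

lemma is_word_Cons [simp]: "is_word N (a # w) \<longleftrightarrow> 1 \<le> a \<and> a < N \<and> is_word N w"
  by (auto simp: is_word_def)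

lemma is_word_append [simp]: "is_word N (u @ v) \<longleftrightarrow> is_word N u \<and> is_word N v"
  by (auto simp: is_word_def)

lemma is_word_upt: "1 \<le> a \<Longrightarrow> b \<le> N \<Longrightarrow> is_word N [a..<b]"
  by (auto simp: is_word_def)

lemma is_word_concat_map: "(\<And>j. j \<in> set js \<Longrightarrow> is_word N (f j)) \<Longrightarrow> is_word N (concat (map f js))"
  by (induction js) auto

lemma is_word_Psi: "is_word N w \<Longrightarrow> is_word N (Psi N w)"
  by (force simp: is_word_def Psi_def)

lemma upt_eq_append_upt: "a \<le> c \<Longrightarrow> c \<le> d \<Longrightarrow> [a..<d] = [a..<c] @ [c..<d]"
  using upt_add_eq_append[of a c "d - c"] by simp

lemma quot_cong_ctxt:
  "quot_cong N u v \<Longrightarrow> is_word N xs \<Longrightarrow> is_word N ys \<Longrightarrow> quot_cong N (xs @ u @ ys) (xs @ v @ ys)"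
proof (induction rule: quot_cong.induct)
  case (step u v xs' ys')
  then have "quot_cong N ((xs @ xs') @ u @ (ys' @ ys)) ((xs @ xs') @ v @ (ys' @ ys))"
    by (intro quot_cong.step) auto
  then show ?case by simp
qed (auto intro: quot_cong.intros)

lemma phi_eq_if_quot_cong: "quot_cong N u v \<Longrightarrow> phi N u = phi N v"
  unfolding phi_def by (auto intro: quot_cong.sym quot_cong.trans)

lemma quot_cong_base: "quot_base N u v \<Longrightarrow> quot_cong N u v"
  using quot_cong.step[of N u v "[]" "[]"] by simp

lemma quot_cong_idem: "1 \<le> i \<Longrightarrow> i < N \<Longrightarrow> quot_cong N [i, i] [i]"
  by (intro quot_cong_base quot_base.hecke hecke_base.idem)

lemma quot_cong_comm:
  "1 \<le> i \<Longrightarrow> i < N \<Longrightarrow> 1 \<le> j \<Longrightarrow> j < N \<Longrightarrow> i + 2 \<le> j \<or> j + 2 \<le> i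
    \<Longrightarrow> quot_cong N [i, j] [j, i]"
  by (intro quot_cong_base quot_base.hecke hecke_base.comm)

lemma quot_cong_absorb_right: "1 \<le> i \<Longrightarrow> i + 1 < N \<Longrightarrow> quot_cong N [i, Suc i, i] [i, Suc i]"
  by (intro quot_cong_base quot_base.extra)

lemma quot_cong_absorb_left: "1 \<le> i \<Longrightarrow> i + 1 < N \<Longrightarrow> quot_cong N [Suc i, i, Suc i] [i, Suc i]"
  by (meson quot_cong_base quot_base.hecke hecke_base.braid quot_cong.sym quot_cong.trans
      quot_cong_absorb_right)

lemma quot_cong_commute_list:
  assumes "is_word N w" "1 \<le> i" "i < N" "\<forall>c\<in>set w. c + 2 \<le> i \<or> i + 2 \<le> c"
  shows "quot_cong N (w @ [i]) (i # w)"
  using assms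
proof (induction w)
  case (Cons c w)
  then have "quot_cong N ([c] @ (w @ [i]) @ []) ([c] @ (i # w) @ [])"
    by (intro quot_cong_ctxt) auto
  moreover have "quot_cong N ([] @ [c, i] @ w) ([] @ [i, c] @ w)"
    using Cons by (intro quot_cong_ctxt quot_cong_comm) auto
  ultimately show ?case by (auto intro: quot_cong.trans)
qed (simp add: quot_cong.refl)

text \<open>In the quotient an ascending run a, a+1, ..., i swallows any letter of its range on
  either side: the letter commutes up to its neighbours in the run and is then removed by
  i (i+1) i = i (i+1) = (i+1) i (i+1).\<close>

lemma quot_cong_upt_snoc:
  assumes "1 \<le> a" "a \<le> c" "c \<le> i" "i < N"
  shows "quot_cong N ([a..<Suc i] @ [c]) [a..<Suc i]"
proof (cases "c = i")
  case True
  have "quot_cong N ([a..<i] @ [i, i] @ []) ([a..<i] @ [i] @ [])"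
    using assms by (intro quot_cong_ctxt quot_cong_idem) (auto simp: is_word_upt)
  then show ?thesis using assms True by simp
next
  case False
  have run: "[a..<Suc i] = [a..<c] @ [c, Suc c] @ [c + 2..<Suc i]"
    using assms False upt_eq_append_upt[of a c "Suc i"] by (simp add: upt_conv_Cons)
  have "quot_cong N (([a..<c] @ [c, Suc c]) @ ([c + 2..<Suc i] @ [c]) @ [])
                    (([a..<c] @ [c, Suc c]) @ (c # [c + 2..<Suc i]) @ [])"
    using assms False by (intro quot_cong_ctxt quot_cong_commute_list) (auto simp: is_word_upt)
  moreover have "quot_cong N ([a..<c] @ [c, Suc c, c] @ [c + 2..<Suc i]) ([a..<c] @ [c, Suc c] @ [c + 2..<Suc i])"
    using assms False by (intro quot_cong_ctxt quot_cong_absorb_right) (auto simp: is_word_upt)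
  ultimately show ?thesis unfolding run by (auto intro: quot_cong.trans)
qed

lemma quot_cong_Cons_upt:
  assumes "1 \<le> a" "a \<le> c" "c \<le> i" "i < N"
  shows "quot_cong N (c # [a..<Suc i]) [a..<Suc i]"
proof (cases "c = a")
  case True
  have "quot_cong N ([] @ [a, a] @ [Suc a..<Suc i]) ([] @ [a] @ [Suc a..<Suc i])"
    using assms by (intro quot_cong_ctxt quot_cong_idem) (auto simp: is_word_upt)
  then show ?thesis using assms True by (simp add: upt_rec)
next
  case False
  then obtain d where d: "c = Suc d" "a \<le> d" using assms by (cases c) auto
  have run: "[a..<Suc i] = [a..<d] @ [d, Suc d] @ [Suc (Suc d)..<Suc i]"
    using assms d upt_eq_append_upt[of a d "Suc i"] by (simp add: upt_conv_Cons)
  have "quot_cong N ([] @ ([a..<d] @ [c]) @ [d, Suc d] @ [Suc (Suc d)..<Suc i])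
                    ([] @ (c # [a..<d]) @ [d, Suc d] @ [Suc (Suc d)..<Suc i])"
    using assms d by (intro quot_cong_ctxt quot_cong_commute_list) (auto simp: is_word_upt)
  moreover have "quot_cong N ([a..<d] @ [Suc d, d, Suc d] @ [Suc (Suc d)..<Suc i])
                             ([a..<d] @ [d, Suc d] @ [Suc (Suc d)..<Suc i])"
    using assms d by (intro quot_cong_ctxt quot_cong_absorb_left) (auto simp: is_word_upt)
  ultimately show ?thesis unfolding run using d
    by (simp only: append_assoc append_Cons append_Nil) (blast intro: quot_cong.trans quot_cong.sym)
qed

lemma quot_cong_append_upt:
  assumes "\<forall>c\<in>set w. a \<le> c \<and> c \<le> i" "1 \<le> a" "i < N"
  shows "quot_cong N (w @ [a..<Suc i]) [a..<Suc i]"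
  using assms
proof (induction w)
  case (Cons c w)
  then have "quot_cong N ([c] @ (w @ [a..<Suc i]) @ []) ([c] @ [a..<Suc i] @ [])"
    by (intro quot_cong_ctxt) auto
  moreover have "quot_cong N (c # [a..<Suc i]) [a..<Suc i]"
    using Cons by (intro quot_cong_Cons_upt) auto
  ultimately show ?case by (auto intro: quot_cong.trans)
qed (simp add: quot_cong.refl)

lemma quot_cong_upt_append:
  assumes "\<forall>c\<in>set w. a \<le> c \<and> c \<le> i" "1 \<le> a" "i < N"
  shows "quot_cong N ([a..<Suc i] @ w) [a..<Suc i]"
  using assms
proof (induction w rule: rev_induct)
  case (snoc c w)
  then have "quot_cong N ([] @ ([a..<Suc i] @ w) @ [c]) ([] @ [a..<Suc i] @ [c])"
    by (intro quot_cong_ctxt) (auto simp: is_word_upt)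
  moreover have "quot_cong N ([a..<Suc i] @ [c]) [a..<Suc i]"
    using snoc by (intro quot_cong_upt_snoc) auto
  ultimately show ?case by (auto intro: quot_cong.trans)
qed (simp add: quot_cong.refl)

lemma quot_cong_upt_upt:
  assumes "1 \<le> a" "a \<le> b" "i < N"
  shows "quot_cong N ([b..<Suc i] @ [a..<Suc i]) ([a..<Suc i] @ [a..<i])"
proof -
  have "quot_cong N ([b..<Suc i] @ [a..<Suc i]) [a..<Suc i]"
    using assms by (intro quot_cong_append_upt) auto
  moreover have "quot_cong N ([a..<Suc i] @ [a..<i]) [a..<Suc i]"
    using assms by (intro quot_cong_upt_append) auto
  ultimately show ?thesis by (blast intro: quot_cong.trans quot_cong.sym)
qed

section \<open>The action by monotone maps\<close>

definition lower :: "nat \<Rightarrow> nat \<Rightarrow> nat" where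
  "lower i j = (if j = Suc i then i else j)"

definition lower_word :: "nat list \<Rightarrow> nat \<Rightarrow> nat" where
  "lower_word w = foldr (\<lambda>i h. lower i \<circ> h) w id"

lemma lower_word_Nil [simp]: "lower_word [] = id"
  by (simp add: lower_word_def)

lemma lower_word_snoc: "lower_word (w @ [i]) = lower_word w \<circ> lower i"
proof -
  have "foldr (\<lambda>i h. lower i \<circ> h) w g = lower_word w \<circ> g" for g
    by (induction w) (simp_all add: lower_word_def comp_assoc)
  then show ?thesis by (simp add: lower_word_def)
qed

definition deflation :: "(nat \<Rightarrow> nat) \<Rightarrow> bool" where
  "deflation h \<longleftrightarrow> mono h \<and> (\<forall>j. h j \<le> j) \<and> (\<forall>j. 1 \<le> j \<longrightarrow> 1 \<le> h j)"

lemma deflation_lower_word: "is_word N w \<Longrightarrow> deflation (lower_word w)"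
proof (induction w rule: rev_induct)
  case (snoc i w)
  then have "deflation (lower_word w)" "1 \<le> i" by auto
  then show ?case
    by (auto simp: deflation_def lower_word_snoc lower_def mono_def le_SucI)
qed (simp add: deflation_def mono_def)

definition normal_word :: "nat \<Rightarrow> (nat \<Rightarrow> nat) \<Rightarrow> nat list" where
  "normal_word N h = concat (map (\<lambda>j. [h j..<j]) (rev [1..<Suc N]))"

lemma normal_word_cong: "(\<And>j. j \<in> {1..N} \<Longrightarrow> h j = g j) \<Longrightarrow> normal_word N h = normal_word N g"
  unfolding normal_word_def by (intro arg_cong[where f = concat] map_cong) auto

lemma normal_word_split:
  assumes "1 \<le> i" "i < N"
  shows "normal_word N h = concat (map (\<lambda>j. [h j..<j]) (rev [i + 2..<Suc N]))
    @ [h (Suc i)..<Suc i] @ [h i..<i] @ concat (map (\<lambda>j. [h j..<j]) (rev [1..<i]))"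
proof -
  have "rev [1..<Suc N] = rev [i + 2..<Suc N] @ [Suc i, i] @ rev [1..<i]"
    using assms upt_eq_append_upt[of 1 i "Suc N"] upt_conv_Cons[of i "Suc N"]
      upt_conv_Cons[of "Suc i" "Suc N"]
    by simp
  then show ?thesis
    unfolding normal_word_def by simp
qed

lemma normal_word_snoc:
  assumes h: "deflation h" and i: "1 \<le> i" "i < N"
  shows "quot_cong N (normal_word N h @ [i]) (normal_word N (h \<circ> lower i))"
proof -
  have hi: "1 \<le> h i" "h i \<le> i" "h i \<le> h (Suc i)" and pos: "\<And>j. 1 \<le> j \<Longrightarrow> 1 \<le> h j"
    using h i by (auto simp: deflation_def mono_def)
  define X where "X = concat (map (\<lambda>j. [h j..<j]) (rev [i + 2..<Suc N]))"
  define Y where "Y = concat (map (\<lambda>j. [h j..<j]) (rev [1..<i]))"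
  have words: "is_word N X" "is_word N Y"
    unfolding X_def Y_def using pos i by (force intro!: is_word_concat_map is_word_upt)+
  have "quot_cong N (Y @ [i]) (i # Y)"
    using words i by (intro quot_cong_commute_list) (auto simp: Y_def)
  then have "quot_cong N ((X @ [h (Suc i)..<Suc i] @ [h i..<i]) @ (Y @ [i]) @ [])
                         ((X @ [h (Suc i)..<Suc i] @ [h i..<i]) @ (i # Y) @ [])"
    using i hi words by (intro quot_cong_ctxt) (auto simp: is_word_upt)
  then have "quot_cong N (X @ [h (Suc i)..<Suc i] @ [h i..<i] @ Y @ [i])
                         (X @ ([h (Suc i)..<Suc i] @ [h i..<Suc i]) @ Y)"
    using hi by simp
  moreover have "quot_cong N (X @ ([h (Suc i)..<Suc i] @ [h i..<Suc i]) @ Y)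
                             (X @ ([h i..<Suc i] @ [h i..<i]) @ Y)"
    using hi i words by (intro quot_cong_ctxt quot_cong_upt_upt) auto
  ultimately have "quot_cong N (X @ [h (Suc i)..<Suc i] @ [h i..<i] @ Y @ [i])
                               (X @ [h i..<Suc i] @ [h i..<i] @ Y)"
    by (simp only: append_assoc) (rule quot_cong.trans)
  moreover have "normal_word N h = X @ [h (Suc i)..<Suc i] @ [h i..<i] @ Y"
    unfolding X_def Y_def by (rule normal_word_split[OF i])
  moreover have "normal_word N (h \<circ> lower i) = X @ [h i..<Suc i] @ [h i..<i] @ Y"
  proof -
    have "map (\<lambda>j. [(h \<circ> lower i) j..<j]) (rev [i + 2..<Suc N]) = map (\<lambda>j. [h j..<j]) (rev [i + 2..<Suc N])"
      and "map (\<lambda>j. [(h \<circ> lower i) j..<j]) (rev [1..<i]) = map (\<lambda>j. [h j..<j]) (rev [1..<i])"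
      and "(h \<circ> lower i) (Suc i) = h i" "(h \<circ> lower i) i = h i"
      by (auto intro!: map_cong simp: lower_def)
    then show ?thesis
      unfolding X_def Y_def normal_word_split[OF i] by (simp only:)
  qed
  ultimately show ?thesis by simp
qed

lemma quot_cong_normal_word: "is_word N w \<Longrightarrow> quot_cong N w (normal_word N (lower_word w))"
proof (induction w rule: rev_induct)
  case Nil
  have "normal_word N id = []" by (simp add: normal_word_def)
  then show ?case by (simp add: quot_cong.refl id_def)
next
  case (snoc i w)
  then have w: "is_word N w" and i: "1 \<le> i" "i < N" by auto
  have "quot_cong N ([] @ w @ [i]) ([] @ normal_word N (lower_word w) @ [i])"
    using snoc w i by (intro quot_cong_ctxt) auto
  then show ?case
    unfolding lower_word_snoc
    using normal_word_snoc[OF deflation_lower_word[OF w] i] by (simp only: append_Nil) (rule quot_cong.trans)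
qed

lemma quot_cong_if_lower_word_eq:
  assumes "is_word N w" "is_word N v" "\<And>j. j \<in> {1..N} \<Longrightarrow> lower_word w j = lower_word v j"
  shows "quot_cong N w v"
  using quot_cong_normal_word[OF assms(1)] quot_cong_normal_word[OF assms(2)]
    normal_word_cong[of N "lower_word w" "lower_word v"] assms(3)
  by (metis quot_cong.sym quot_cong.trans)

section \<open>Inversions and reduced words\<close>

lemma word_perm_Nil [simp]: "word_perm [] = id"
  by (simp add: word_perm_def)

lemma word_perm_snoc: "word_perm (w @ [i]) = word_perm w \<circ> st i"
proof -
  have "foldr (\<lambda>i f. st i \<circ> f) w g = word_perm w \<circ> g" for g
    by (induction w) (simp_all add: word_perm_def comp_assoc)
  then show ?thesis by (simp add: word_perm_def)
qed

lemma st_permutes: "1 \<le> i \<Longrightarrow> i < N \<Longrightarrow> st i permutes {1..N}"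
  unfolding st_def by (rule permutes_swap_id) auto

lemma word_perm_permutes: "is_word N w \<Longrightarrow> word_perm w permutes {1..N}"
proof (induction w rule: rev_induct)
  case (snoc i w)
  then show ?case
    unfolding word_perm_snoc by (intro permutes_compose st_permutes) auto
qed simp

lemma permutes_neq_Suc: "x permutes {1..N} \<Longrightarrow> 1 \<le> i \<Longrightarrow> i < N \<Longrightarrow> x i \<noteq> x (Suc i)"
  by (metis n_not_Suc_n permutes_inj injD)

definition inversions :: "nat \<Rightarrow> (nat \<Rightarrow> nat) \<Rightarrow> (nat \<times> nat) set" where
  "inversions N x = {(a, b). 1 \<le> a \<and> a < b \<and> b \<le> N \<and> x b < x a}"

definition inv_count :: "nat \<Rightarrow> (nat \<Rightarrow> nat) \<Rightarrow> nat" where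
  "inv_count N x = card (inversions N x)"

lemma finite_inversions: "finite (inversions N x)"
  by (rule finite_subset[of _ "{1..N} \<times> {1..N}"]) (auto simp: inversions_def)

lemma inv_count_id [simp]: "inv_count N id = 0"
proof -
  have "inversions N id = {}"
    by (auto simp: inversions_def)
  then show ?thesis by (simp add: inv_count_def)
qed

text \<open>Right multiplication by s_i permutes the inversions other than (i, i+1).\<close>

lemma card_inversions_comp_st:
  assumes "1 \<le> i" "i < N"
  shows "card (inversions N (x \<circ> st i) - {(i, Suc i)}) = card (inversions N x - {(i, Suc i)})"
proof -
  let ?t = "\<lambda>(a, b). (st i a, st i b)"
  have "inversions N (x \<circ> st i) - {(i, Suc i)} = ?t ` (inversions N x - {(i, Suc i)})"
  proof (intro equalityI subsetI)
    fix z assume z: "z \<in> inversions N (x \<circ> st i) - {(i, Suc i)}"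
    obtain a b where ab: "z = (a, b)" by (cases z)
    have "(st i a, st i b) \<in> inversions N x - {(i, Suc i)}"
      using z assms unfolding ab inversions_def st_def by (auto simp: transpose_def split: if_splits)
    moreover have "z = ?t (st i a, st i b)"
      using ab by (simp add: st_def)
    ultimately show "z \<in> ?t ` (inversions N x - {(i, Suc i)})" by blast
  next
    fix z assume "z \<in> ?t ` (inversions N x - {(i, Suc i)})"
    then show "z \<in> inversions N (x \<circ> st i) - {(i, Suc i)}"
      using assms unfolding inversions_def st_def by (auto simp: transpose_def split: if_splits)
  qed
  moreover have "inj_on ?t (inversions N x - {(i, Suc i)})"
    by (rule inj_onI) (auto simp: st_def dest: transpose_eq_imp_eq)
  ultimately show ?thesis by (simp add: card_image)
qed

lemma inv_count_comp_st_ascent: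
  assumes "1 \<le> i" "i < N" "x i < x (Suc i)"
  shows "inv_count N (x \<circ> st i) = Suc (inv_count N x)"
proof -
  have "(i, Suc i) \<in> inversions N (x \<circ> st i)" "(i, Suc i) \<notin> inversions N x"
    using assms by (simp_all add: inversions_def st_def)
  with card_inversions_comp_st[OF assms(1,2), of x] finite_inversions show ?thesis
    unfolding inv_count_def by (metis card_Suc_Diff1 Diff_empty Diff_insert0)
qed

lemma inv_count_comp_st_descent:
  assumes "1 \<le> i" "i < N" "x (Suc i) < x i"
  shows "Suc (inv_count N (x \<circ> st i)) = inv_count N x"
proof -
  have "(x \<circ> st i) \<circ> st i = x"
    by (simp add: comp_assoc st_def)
  moreover have "(x \<circ> st i) i < (x \<circ> st i) (Suc i)"
    using assms by (simp add: st_def)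
  ultimately show ?thesis
    using inv_count_comp_st_ascent[OF assms(1,2), of "x \<circ> st i"] by simp
qed

lemma inv_count_word_perm_le: "is_word N w \<Longrightarrow> inv_count N (word_perm w) \<le> length w"
proof (induction w rule: rev_induct)
  case (snoc i w)
  then have w: "is_word N w" and i: "1 \<le> i" "i < N" by auto
  consider "word_perm w i < word_perm w (Suc i)" | "word_perm w (Suc i) < word_perm w i"
    using permutes_neq_Suc[OF word_perm_permutes[OF w] i] by linarith
  then show ?case
  proof cases
    case 1
    then show ?thesis using inv_count_comp_st_ascent[OF i 1] snoc.IH[OF w]
      unfolding word_perm_snoc length_append_singleton by linarith
  next
    case 2
    then show ?thesis using inv_count_comp_st_descent[OF i 2] snoc.IH[OF w]
      unfolding word_perm_snoc length_append_singleton by linarith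
  qed
qed simp

lemma permutes_without_descents_id:
  assumes x: "x permutes {1..N}" and asc: "\<And>i. 1 \<le> i \<Longrightarrow> i < N \<Longrightarrow> x i < x (Suc i)"
  shows "x = id"
proof -
  have range: "1 \<le> x j \<and> x j \<le> N" if "1 \<le> j" "j \<le> N" for j
    using permutes_in_image[OF x] that by auto
  have fixed: "x j = j" if "j \<notin> {1..N}" for j
    by (rule permutes_not_in[OF x that])
  have lower: "j \<le> x j" if "1 \<le> j" for j
    using that
  proof (induction j rule: dec_induct)
    case base
    show ?case using range[of 1] fixed[of 1] by (cases "1 \<le> N") auto
  next
    case (step n)
    then show ?case using asc[of n] fixed[of "Suc n"] by (cases "Suc n \<le> N") auto
  qed
  have upper: "x j \<le> j" if "j \<le> N" for j
    using that
  proof (induction j rule: inc_induct)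
    case base
    show ?case using range[of N] fixed[of N] by (cases "1 \<le> N") auto
  next
    case (step n)
    then show ?case using asc[of n] fixed[of n] by (cases "1 \<le> n") auto
  qed
  show ?thesis
  proof
    fix j
    show "x j = id j"
      using lower[of j] upper[of j] fixed[of j] by (cases "j \<in> {1..N}") auto
  qed
qed

lemma ex_word_length_le_inv_count:
  "x permutes {1..N} \<Longrightarrow> \<exists>w. is_word N w \<and> word_perm w = x \<and> length w \<le> inv_count N x"
proof (induction "inv_count N x" arbitrary: x rule: less_induct)
  case less
  show ?case
  proof (cases "x = id")
    case True
    then show ?thesis by (intro exI[of _ "[]"]) simp
  next
    case False
    then obtain i where i: "1 \<le> i" "i < N" "\<not> x i < x (Suc i)"
      using permutes_without_descents_id[OF less.prems] by blast
    let ?y = "x \<circ> st i"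
    have y: "?y permutes {1..N}"
      by (intro permutes_compose st_permutes less.prems i)
    have "x (Suc i) < x i"
      using i permutes_neq_Suc[OF less.prems i(1,2)] by simp
    then have less_inv: "Suc (inv_count N ?y) = inv_count N x"
      by (rule inv_count_comp_st_descent[OF i(1,2)])
    then obtain v where v: "is_word N v" "word_perm v = ?y" "length v \<le> inv_count N ?y"
      using less.hyps[of ?y] y by auto
    have "word_perm (v @ [i]) = x"
      using v by (simp add: word_perm_snoc comp_assoc st_def)
    with v i less_inv show ?thesis
      by (intro exI[of _ "v @ [i]"]) auto
  qed
qed

lemma red_word:
  assumes "x permutes {1..N}"
  shows "is_word N (red_word N x)" "word_perm (red_word N x) = x"
    "inv_count N x = length (red_word N x)"
proof -
  obtain v where v: "is_word N v" "word_perm v = x" "length v \<le> inv_count N x"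
    using ex_word_length_le_inv_count[OF assms] by blast
  obtain w where "is_word N w \<and> word_perm w = x"
    "\<forall>u. is_word N u \<and> word_perm u = x \<longrightarrow> length w \<le> length u"
    using ex_has_least_nat[of "\<lambda>w. is_word N w \<and> word_perm w = x" v length] v by blast
  then have "reduced_word N x w"
    by (simp add: reduced_word_def)
  then have "reduced_word N x (red_word N x)"
    unfolding red_word_def by (rule someI)
  then show w: "is_word N (red_word N x)" "word_perm (red_word N x) = x"
    by (auto simp: reduced_word_def)
  have "length (red_word N x) \<le> length v"
    using \<open>reduced_word N x (red_word N x)\<close> v by (simp add: reduced_word_def)
  then show "inv_count N x = length (red_word N x)"
    using inv_count_word_perm_le[OF w(1)] w(2) v(3) by simp
qed

section \<open>The action of a reduced word\<close>

lemma reduced_snoc: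
  assumes w: "is_word N (w @ [i])" and red: "inv_count N (word_perm (w @ [i])) = length (w @ [i])"
  shows "inv_count N (word_perm w) = length w" "word_perm w i < word_perm w (Suc i)"
proof -
  have w: "is_word N w" and i: "1 \<le> i" "i < N"
    using w by auto
  have red': "inv_count N (word_perm w \<circ> st i) = Suc (length w)"
    using red by (simp only: word_perm_snoc length_append_singleton)
  have le: "inv_count N (word_perm w) \<le> length w"
    by (rule inv_count_word_perm_le[OF w])
  show asc: "word_perm w i < word_perm w (Suc i)"
  proof (rule ccontr)
    assume "\<not> word_perm w i < word_perm w (Suc i)"
    then have "word_perm w (Suc i) < word_perm w i"
      using permutes_neq_Suc[OF word_perm_permutes[OF w] i] by linarith
    from inv_count_comp_st_descent[OF i this] red' le show False by linarith
  qed
  from inv_count_comp_st_ascent[OF i asc] red' show "inv_count N (word_perm w) = length w"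
    by linarith
qed

lemma Min_insert_insert_greater: "finite S \<Longrightarrow> a < b \<Longrightarrow> Min (insert a (insert b S)) = Min (insert a S)"
  by (cases "S = {}") (auto simp: Min_insert min_def)

lemma Max_insert_insert_less: "finite S \<Longrightarrow> b < a \<Longrightarrow> Max (insert a (insert b S)) = Max (insert a S)"
  by (cases "S = {}") (auto simp: Max_insert max_def)

lemma Min_image_comp_st:
  assumes i: "1 \<le> i" "i < N" and asc: "y i < y (Suc i)" and j: "j \<in> {1..N}"
  shows "Min ((y \<circ> st i) ` {j..N}) = Min (y ` {lower i j..N})"
proof (cases "j = Suc i")
  case True
  have "st i ` {Suc (Suc i)..N} = {Suc (Suc i)..N}"
    unfolding st_def by (rule transpose_image_eq) auto
  moreover have "{j..N} = insert (Suc i) {Suc (Suc i)..N}" "{i..N} = insert i {j..N}"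
    using True i by auto
  ultimately have "(y \<circ> st i) ` {j..N} = insert (y i) (y ` {Suc (Suc i)..N})"
    and "y ` {lower i j..N} = insert (y i) (insert (y (Suc i)) (y ` {Suc (Suc i)..N}))"
    using True by (auto simp: image_comp[symmetric] st_def lower_def)
  then show ?thesis
    using asc by (simp only: Min_insert_insert_greater finite_imageI finite_atLeastAtMost)
next
  case False
  have "st i ` {j..N} = {j..N}"
    unfolding st_def using False i j by (intro transpose_image_eq) auto
  then have "(y \<circ> st i) ` {j..N} = y ` {j..N}"
    by (simp only: image_comp[symmetric])
  with False show ?thesis
    by (simp add: lower_def)
qed

lemma Max_image_comp_st:
  assumes i: "1 \<le> i" "i < N" and asc: "y i < y (Suc i)" and m: "m \<in> {1..N}"
  shows "Max ((y \<circ> st i) ` {1..m}) = Max (y ` {1..(if m = i then Suc i else m)})"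
proof (cases "m = i")
  case True
  have "st i ` {1..<i} = {1..<i}"
    unfolding st_def by (rule transpose_image_eq) auto
  moreover have "{1..i} = insert i {1..<i}" "{1..Suc i} = insert (Suc i) {1..i}"
    using i by auto
  ultimately have "(y \<circ> st i) ` {1..i} = insert (y (Suc i)) (y ` {1..<i})"
    and "y ` {1..Suc i} = insert (y (Suc i)) (insert (y i) (y ` {1..<i}))"
    by (auto simp: image_comp[symmetric] st_def)
  then show ?thesis
    using asc True by (simp del: Max_insert add: Max_insert_insert_less)
next
  case False
  have "st i ` {1..m} = {1..m}"
    unfolding st_def using False i m by (intro transpose_image_eq) auto
  then have "(y \<circ> st i) ` {1..m} = y ` {1..m}"
    by (simp only: image_comp[symmetric])
  with False show ?thesis
    by simp
qed

lemma lower_word_reduced: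
  assumes "is_word N w" "inv_count N (word_perm w) = length w" "j \<in> {1..N}"
  shows "lower_word w j = Min (word_perm w ` {j..N})"
  using assms
proof (induction w arbitrary: j rule: rev_induct)
  case Nil
  then show ?case by (intro Min_eqI[symmetric]) auto
next
  case (snoc i w)
  then have w: "is_word N w" and i: "1 \<le> i" "i < N" by auto
  note red = reduced_snoc[OF snoc.prems(1,2)]
  have "lower i j \<in> {1..N}"
    using snoc.prems(3) i by (auto simp: lower_def)
  then have "lower_word (w @ [i]) j = Min (word_perm w ` {lower i j..N})"
    using snoc.IH[OF w red(1)] by (simp add: lower_word_snoc)
  also have "\<dots> = Min (word_perm (w @ [i]) ` {j..N})"
    using Min_image_comp_st[OF i red(2) snoc.prems(3)] by (simp add: word_perm_snoc)
  finally show ?case .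
qed

lemma lower_word_Psi_reduced:
  assumes "is_word N w" "inv_count N (word_perm w) = length w" "j \<in> {1..N}"
  shows "lower_word (Psi N w) j = Suc N - Max (word_perm w ` {1..Suc N - j})"
  using assms
proof (induction w arbitrary: j rule: rev_induct)
  case Nil
  then have "Max {1..Suc N - j} = Suc N - j"
    by (intro Max_eqI) auto
  then show ?case
    using Nil by (simp add: Psi_def)
next
  case (snoc i w)
  then have w: "is_word N w" and i: "1 \<le> i" "i < N" by auto
  note red = reduced_snoc[OF snoc.prems(1,2)]
  have Psi: "Psi N (w @ [i]) = Psi N w @ [N - i]"
    by (simp add: Psi_def)
  have "lower (N - i) j \<in> {1..N}"
    using snoc.prems(3) i by (auto simp: lower_def)
  moreover have "Suc N - lower (N - i) j = (if Suc N - j = i then Suc i else Suc N - j)"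
    using snoc.prems(3) i by (auto simp: lower_def)
  ultimately have "lower_word (Psi N (w @ [i])) j
      = Suc N - Max (word_perm w ` {1..(if Suc N - j = i then Suc i else Suc N - j)})"
    using snoc.IH[OF w red(1)] by (simp add: Psi lower_word_snoc)
  also have "\<dots> = Suc N - Max (word_perm (w @ [i]) ` {1..Suc N - j})"
  proof -
    have "Suc N - j \<in> {1..N}"
      using snoc.prems(3) by auto
    then show ?thesis
      by (simp only: word_perm_snoc Max_image_comp_st[OF i red(2)])
  qed
  finally show ?case .
qed

section \<open>Exchanging the middle entries of a [4321]-pattern\<close>

lemma omega_perm_eq_if_extrema_eq:
  assumes x: "x permutes {1..N}" and y: "y permutes {1..N}"
    and Min_eq: "\<And>j. j \<in> {1..N} \<Longrightarrow> Min (x ` {j..N}) = Min (y ` {j..N})"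
    and Max_eq: "\<And>m. m \<in> {1..N} \<Longrightarrow> Max (x ` {1..m}) = Max (y ` {1..m})"
  shows "omega_perm N x = omega_perm N y"
proof -
  note wx = red_word[OF x] and wy = red_word[OF y]
  have "quot_cong N (red_word N x) (red_word N y)"
    using wx wy Min_eq by (intro quot_cong_if_lower_word_eq) (simp_all add: lower_word_reduced)
  moreover have "quot_cong N (Psi N (red_word N x)) (Psi N (red_word N y))"
  proof (intro quot_cong_if_lower_word_eq is_word_Psi wx(1) wy(1))
    fix j assume "j \<in> {1..N}"
    moreover have "Suc N - j \<in> {1..N}"
      using \<open>j \<in> {1..N}\<close> by auto
    ultimately show "lower_word (Psi N (red_word N x)) j = lower_word (Psi N (red_word N y)) j"
      using wx wy Max_eq by (simp add: lower_word_Psi_reduced)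
  qed
  ultimately show ?thesis
    unfolding omega_perm_def omega_def by (simp add: phi_eq_if_quot_cong)
qed

lemma image_comp_transpose:
  "a \<notin> A \<Longrightarrow> b \<in> A \<Longrightarrow> (x \<circ> Transposition.transpose a b) ` A = insert (x a) (x ` (A - {b}))"
  by (auto simp: image_comp[symmetric] transpose_def image_iff split: if_splits)

lemma Min_insert_absorb: "finite C \<Longrightarrow> c \<in> C \<Longrightarrow> c < a \<Longrightarrow> Min (insert a C) = Min C"
  by (metis Min.insert Min_le empty_iff min.absorb2 nless_le order.trans)

lemma Max_insert_absorb: "finite C \<Longrightarrow> c \<in> C \<Longrightarrow> a < c \<Longrightarrow> Max (insert a C) = Max C"
  by (metis Max.insert Max_ge empty_iff max.absorb2 less_imp_le order.trans)

lemma Min_suffix_comp_transpose: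
  fixes x :: "nat \<Rightarrow> 'a::linorder"
  assumes "q < r" "r < s" "s \<le> N" "x s < x q" "x s < x r"
  shows "Min ((x \<circ> Transposition.transpose q r) ` {j..N}) = Min (x ` {j..N})"
proof (cases "q < j \<and> j \<le> r")
  case True
  let ?C = "x ` ({j..N} - {r})"
  have s: "x s \<in> ?C"
    using True assms by (intro imageI) auto
  have "(x \<circ> Transposition.transpose q r) ` {j..N} = insert (x q) ?C"
    using True assms by (intro image_comp_transpose) auto
  then have "Min ((x \<circ> Transposition.transpose q r) ` {j..N}) = Min ?C"
    using Min_insert_absorb[OF _ s] assms by simp
  also have "\<dots> = Min (insert (x r) ?C)"
    using Min_insert_absorb[OF _ s] assms by simp
  also have "insert (x r) ?C = x ` {j..N}"
    using True assms by auto
  finally show ?thesis .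
next
  case False
  then have "Transposition.transpose q r ` {j..N} = {j..N}"
    using assms by (intro transpose_image_eq) auto
  then show ?thesis
    by (simp only: image_comp[symmetric])
qed

lemma Max_prefix_comp_transpose:
  fixes x :: "nat \<Rightarrow> 'a::linorder"
  assumes "1 \<le> p" "p < q" "q < r" "x q < x p" "x r < x p"
  shows "Max ((x \<circ> Transposition.transpose q r) ` {1..m}) = Max (x ` {1..m})"
proof (cases "q \<le> m \<and> m < r")
  case True
  let ?C = "x ` ({1..m} - {q})"
  have p: "x p \<in> ?C"
    using True assms by (intro imageI) auto
  have "(x \<circ> Transposition.transpose r q) ` {1..m} = insert (x r) ?C"
    using True assms by (intro image_comp_transpose) auto
  then have "Max ((x \<circ> Transposition.transpose q r) ` {1..m}) = Max ?C"
    using Max_insert_absorb[OF _ p] assms by (simp add: transpose_commute)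
  also have "\<dots> = Max (insert (x q) ?C)"
    using Max_insert_absorb[OF _ p] assms by simp
  also have "insert (x q) ?C = x ` {1..m}"
    using True assms by auto
  finally show ?thesis .
next
  case False
  then have "Transposition.transpose q r ` {1..m} = {1..m}"
    using assms by (intro transpose_image_eq) auto
  then show ?thesis
    by (simp only: image_comp[symmetric])
qed

lemma omega_perm_comp_transpose_4321:
  assumes x: "x permutes {1..N}" and pat: "is_4321 N x p q r s"
  shows "omega_perm N (x \<circ> Transposition.transpose q r) = omega_perm N x"
proof (rule omega_perm_eq_if_extrema_eq)
  show "x \<circ> Transposition.transpose q r permutes {1..N}"
    using pat by (intro permutes_compose[OF _ x] permutes_swap_id) (auto simp: is_4321_def)
  show "Min ((x \<circ> Transposition.transpose q r) ` {j..N}) = Min (x ` {j..N})" for j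
    using pat by (intro Min_suffix_comp_transpose) (auto simp: is_4321_def)
  show "Max ((x \<circ> Transposition.transpose q r) ` {1..m}) = Max (x ` {1..m})" for m
    using pat by (intro Max_prefix_comp_transpose[of p]) (auto simp: is_4321_def)
qed (rule x)

theorem mainTheorem13:
  fixes N :: nat and x :: "nat \<Rightarrow> nat" and p q r s :: nat
  assumes "x permutes {1..N}"
    and "minimal_4321 N x p q r s"
  shows "omega_perm N (x \<circ> Transposition.transpose q r) = omega_perm N x"
  using assms by (auto simp: minimal_4321_def intro: omega_perm_comp_transpose_4321)

end
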